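(* There is some $d_0$ such that the following holds for every $d\geq d_0$. Let $G$ be a finite bipartite graph with vertex classes $A$ and $B$ such that $|A|\geq |B|$, $d_G(x,y)\leq d^{1/5}$ for all distinct $x,y\in B$, $d_G(x)\leq d$ for every $x\in A$, and $d(G)\geq d^{3/4}$. Then $G$ contains a $C_4$-free subgraph with average degree at least $d^{1/4}$.
   Context: $d(G)=2e(G)/|V(G)|$ is the average degree; $d_G(x)$ is the degree of $x$; the codegree $d_G(x,y)$ is the number of common neighbours of $x$ and $y$ in $G$. A graph is $C_4$-free if it contains no $4$-cycle as a subgraph. *)

theory Defs
  imports Complex_Main
begin

definition graph :: "'a set \<Rightarrow> 'a set set \<Rightarrow> bool" where
  "graph V E \<longleftrightarrow> finite V \<and> (\<forall>e\<in>E. e \<subseteq> V \<and> (\<exists>x y. x \<noteq> y \<and> e = {x, y}))"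

definition degree :: "'a set set \<Rightarrow> 'a \<Rightarrow> nat" where
  "degree E x = card {y. {x, y} \<in> E}"

definition codegree :: "'a set set \<Rightarrow> 'a \<Rightarrow> 'a \<Rightarrow> nat" where
  "codegree E x y = card {z. {x, z} \<in> E \<and> {y, z} \<in> E}"

definition avg_degree :: "'a set \<Rightarrow> 'a set set \<Rightarrow> real" where
  "avg_degree V E = 2 * real (card E) / real (card V)"

definition bipartite_with :: "'a set \<Rightarrow> 'a set set \<Rightarrow> 'a set \<Rightarrow> 'a set \<Rightarrow> bool" where
  "bipartite_with V E A B \<longleftrightarrow> A \<union> B = V \<and> A \<inter> B = {} \<and>
     (\<forall>e\<in>E. \<exists>a\<in>A. \<exists>b\<in>B. e = {a, b})"

definition subgraph :: "'a set \<Rightarrow> 'a set set \<Rightarrow> 'a set \<Rightarrow> 'a set set \<Rightarrow> bool" where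
  "subgraph V' E' V E \<longleftrightarrow> V' \<subseteq> V \<and> E' \<subseteq> E \<and> (\<forall>e\<in>E'. e \<subseteq> V')"

definition C4_free :: "'a set set \<Rightarrow> bool" where
  "C4_free E \<longleftrightarrow> \<not> (\<exists>a b c d. distinct [a, b, c, d] \<and>
      {a, b} \<in> E \<and> {b, c} \<in> E \<and> {c, d} \<in> E \<and> {d, a} \<in> E)"

end

theory Submission
  imports Defs "HOL-Library.Discrete_Functions" "HOL-Real_Asymp.Real_Asymp"
begin

(*
  Among the vertices of A of degree at least d^(3/4)/4, which carry at least d^(3/4)|B|/2 edges,
  pigeonhole over the O(log d) dyadic ranges [K, 2K] gives a class A' spanning more than
  64 d^(7/10) |B| edges. A 4-cycle through a in A' is fixed by two neighbours of a and one of their at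
  most d^(1/5) common neighbours, so A' + B spans at most 4 K d^(1/5) 4-cycles per edge. Keep each
  vertex of A' with probability p = d^(-9/20)/32 and each vertex of B with probability q = 4 d^(1/4)/K,
  and delete one edge of every surviving 4-cycle. In expectation this loses at most half of the
  surviving edges, and what remains still exceeds d^(1/4)/2 times the number of surviving vertices,
  so some outcome is a C4-free subgraph of average degree at least d^(1/4).
*)

section \<open>Random subsets\<close>

text \<open>The probability that a random subset of \<open>S\<close>, containing each \<open>x\<close>
  independently with probability \<open>w x\<close>, equals \<open>T\<close>.\<close>
definition subset_prob :: "'a set \<Rightarrow> ('a \<Rightarrow> real) \<Rightarrow> 'a set \<Rightarrow> real" where
  "subset_prob S w T = (\<Prod>x\<in>T. w x) * (\<Prod>x\<in>S - T. 1 - w x)"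

lemma subset_prob_nonneg:
  assumes "\<And>x. x \<in> S \<Longrightarrow> 0 \<le> w x \<and> w x \<le> 1" and "T \<subseteq> S"
  shows "0 \<le> subset_prob S w T"
  unfolding subset_prob_def using assms by (intro mult_nonneg_nonneg prod_nonneg) auto

lemma sum_subset_prob:
  assumes "finite S"
  shows "(\<Sum>T\<in>Pow S. subset_prob S w T) = 1"
  using prod_add[OF assms, of w "\<lambda>x. 1 - w x"] by (simp add: subset_prob_def)

lemma sum_subset_prob_superset:
  assumes "finite S" and "U \<subseteq> S"
  shows "(\<Sum>T\<in>Pow S. subset_prob S w T * of_bool (U \<subseteq> T)) = (\<Prod>x\<in>U. w x)"
proof -
  have fin: "finite U" "finite (S - U)" using assms finite_subset by auto
  have inj: "inj_on (\<lambda>T'. U \<union> T') (Pow (S - U))"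
    by (rule inj_onI) blast
  have img: "(\<lambda>T'. U \<union> T') ` Pow (S - U) = {T \<in> Pow S. U \<subseteq> T}"
  proof
    show "{T \<in> Pow S. U \<subseteq> T} \<subseteq> (\<lambda>T'. U \<union> T') ` Pow (S - U)"
    proof
      fix T assume "T \<in> {T \<in> Pow S. U \<subseteq> T}"
      then have "T = U \<union> (T - U)" "T - U \<in> Pow (S - U)" by auto
      then show "T \<in> (\<lambda>T'. U \<union> T') ` Pow (S - U)" by blast
    qed
  qed (use assms in auto)
  have split: "subset_prob S w (U \<union> T') = (\<Prod>x\<in>U. w x) * subset_prob (S - U) w T'"
    if "T' \<subseteq> S - U" for T'
  proof -
    have "U \<inter> T' = {}" "S - (U \<union> T') = (S - U) - T'" "finite T'"
      using that fin finite_subset by auto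
    then show ?thesis
      unfolding subset_prob_def using fin by (simp add: prod.union_disjoint mult.assoc)
  qed
  have "(\<Sum>T\<in>Pow S. subset_prob S w T * of_bool (U \<subseteq> T))
      = (\<Sum>T\<in>{T \<in> Pow S. U \<subseteq> T}. subset_prob S w T)"
    using assms(1) by (auto intro!: sum.cong)
  also have "\<dots> = (\<Sum>T'\<in>Pow (S - U). subset_prob S w (U \<union> T'))"
    unfolding img[symmetric] by (simp add: sum.reindex[OF inj])
  also have "\<dots> = (\<Prod>x\<in>U. w x) * (\<Sum>T'\<in>Pow (S - U). subset_prob (S - U) w T')"
    by (simp add: split sum_distrib_left)
  also have "\<dots> = (\<Prod>x\<in>U. w x)"
    using fin by (simp add: sum_subset_prob)
  finally show ?thesis .
qed

lemma sum_subset_prob_count: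
  assumes "finite S" and "finite D" and "\<And>y. y \<in> D \<Longrightarrow> g y \<subseteq> S"
  shows "(\<Sum>T\<in>Pow S. subset_prob S w T * real (card {y\<in>D. g y \<subseteq> T})) = (\<Sum>y\<in>D. \<Prod>x\<in>g y. w x)"
proof -
  have "real (card {y\<in>D. g y \<subseteq> T}) = (\<Sum>y\<in>D. of_bool (g y \<subseteq> T))" for T
    using assms(2) by (simp add: Collect_conj_eq Int_commute)
  then have "(\<Sum>T\<in>Pow S. subset_prob S w T * real (card {y\<in>D. g y \<subseteq> T}))
      = (\<Sum>T\<in>Pow S. \<Sum>y\<in>D. subset_prob S w T * of_bool (g y \<subseteq> T))"
    by (simp add: sum_distrib_left del: sum_mult_of_bool_eq sum_of_bool_eq)
  also have "\<dots> = (\<Sum>y\<in>D. \<Sum>T\<in>Pow S. subset_prob S w T * of_bool (g y \<subseteq> T))"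
    by (rule sum.swap)
  also have "\<dots> = (\<Sum>y\<in>D. \<Prod>x\<in>g y. w x)"
    using assms by (intro sum.cong refl sum_subset_prob_superset) auto
  finally show ?thesis .
qed

lemma sum_subset_prob_card:
  assumes "finite S"
  shows "(\<Sum>T\<in>Pow S. subset_prob S w T * real (card T)) = (\<Sum>x\<in>S. w x)"
proof -
  have "(\<Sum>T\<in>Pow S. subset_prob S w T * real (card T))
      = (\<Sum>T\<in>Pow S. subset_prob S w T * real (card {x \<in> S. {x} \<subseteq> T}))"
    by (intro sum.cong refl arg_cong[where f = "\<lambda>T. _ * real (card T)"]) auto
  also have "\<dots> = (\<Sum>x\<in>S. \<Prod>x\<in>{x}. w x)"
    using assms by (intro sum_subset_prob_count) auto
  finally show ?thesis by simp
qed

lemma ex_subset_pos_if_expectation_pos: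
  assumes "\<And>x. x \<in> S \<Longrightarrow> 0 \<le> w x \<and> w x \<le> 1"
    and "0 < (\<Sum>T\<in>Pow S. subset_prob S w T * \<Phi> T)"
  obtains T where "T \<subseteq> S" and "0 < \<Phi> T"
proof -
  have "\<not> (\<forall>T\<in>Pow S. \<Phi> T \<le> 0)"
  proof
    assume "\<forall>T\<in>Pow S. \<Phi> T \<le> 0"
    then have "(\<Sum>T\<in>Pow S. subset_prob S w T * \<Phi> T) \<le> 0"
      using assms(1) by (intro sum_nonpos mult_nonneg_nonpos subset_prob_nonneg) auto
    then show False using assms(2) by simp
  qed
  then show ?thesis using that by (auto simp: not_le)
qed

section \<open>Induced edges and 4-cycles\<close>

definition neighbours :: "'a set set \<Rightarrow> 'a \<Rightarrow> 'a set" where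
  "neighbours E x = {y. {x, y} \<in> E}"

lemma degree_eq_card_neighbours: "degree E x = card (neighbours E x)"
  by (simp add: degree_def neighbours_def)

lemma codegree_eq_card_common_neighbours:
  "codegree E x y = card (neighbours E x \<inter> neighbours E y)"
  by (simp add: codegree_def neighbours_def Collect_conj_eq)

lemma graph_edge_subset: "graph V E \<Longrightarrow> e \<in> E \<Longrightarrow> e \<subseteq> V"
  by (simp add: graph_def)

lemma graph_finite_edges: "graph V E \<Longrightarrow> finite E"
  by (rule finite_subset[of E "Pow V"]) (auto simp: graph_def)

lemma finite_neighbours:
  assumes "graph V E"
  shows "finite (neighbours E x)"
proof (rule finite_subset)
  show "neighbours E x \<subseteq> V"
    using graph_edge_subset[OF assms] by (auto simp: neighbours_def)
qed (use assms in \<open>simp add: graph_def\<close>)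

lemma bipartite_edgeD:
  assumes "bipartite_with V E A B" and "{x, y} \<in> E"
  shows "x \<in> A \<and> y \<in> B \<or> x \<in> B \<and> y \<in> A"
proof -
  obtain a b where "a \<in> A" "b \<in> B" "{x, y} = {a, b}"
    using assms unfolding bipartite_with_def by blast
  then show ?thesis by (auto simp: doubleton_eq_iff)
qed

lemma bipartite_neighbours_subset:
  assumes "bipartite_with V E A B" and "a \<in> A"
  shows "neighbours E a \<subseteq> B"
  using assms bipartite_edgeD[OF assms(1), of a] by (auto simp: neighbours_def bipartite_with_def)

definition induced_edges :: "'a set set \<Rightarrow> 'a set \<Rightarrow> 'a set set" where
  "induced_edges E T = {e \<in> E. e \<subseteq> T}"

text \<open>Ordered 4-tuples, so every 4-cycle is counted eight times; only upper bounds on this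
  count are used.\<close>
definition four_cycles :: "'a set set \<Rightarrow> 'a set \<Rightarrow> ('a \<times> 'a \<times> 'a \<times> 'a) set" where
  "four_cycles E T = {(a, b, c, d). distinct [a, b, c, d] \<and>
     {a, b} \<in> E \<and> {b, c} \<in> E \<and> {c, d} \<in> E \<and> {d, a} \<in> E \<and> {a, b, c, d} \<subseteq> T}"

lemma finite_four_cycles: "finite T \<Longrightarrow> finite (four_cycles E T)"
  by (rule finite_subset[of _ "T \<times> T \<times> T \<times> T"]) (auto simp: four_cycles_def)

lemma C4_free_without_first_edges:
  "C4_free (induced_edges E T - (\<lambda>(a, b, c, d). {a, b}) ` four_cycles E T)"
  (is "C4_free ?E'")
  unfolding C4_free_def
proof (intro notI, elim exE conjE)
  fix a b c d assume cyc: "distinct [a, b, c, d]"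
    "{a, b} \<in> ?E'" "{b, c} \<in> ?E'" "{c, d} \<in> ?E'" "{d, a} \<in> ?E'"
  moreover have "?E' \<subseteq> induced_edges E T" by blast
  ultimately have "{a, b} \<in> induced_edges E T" "{b, c} \<in> induced_edges E T"
    "{c, d} \<in> induced_edges E T" "{d, a} \<in> induced_edges E T"
    by blast+
  with cyc(1) have "(a, b, c, d) \<in> four_cycles E T"
    by (simp add: induced_edges_def four_cycles_def)
  then have "{a, b} \<in> (\<lambda>(a, b, c, d). {a, b}) ` four_cycles E T"
    by (rule rev_image_eqI) simp
  with cyc(2) show False by blast
qed

lemma C4_free_subgraph_by_deletion:
  assumes G: "graph V E" and "T \<subseteq> V" and "0 \<le> c"
    and many_edges: "c * real (card T) < real (card (induced_edges E T)) - real (card (four_cycles E T))"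
  shows "\<exists>V' E'. subgraph V' E' V E \<and> C4_free E' \<and> 2 * c \<le> avg_degree V' E'"
proof -
  define E' where "E' = induced_edges E T - (\<lambda>(a, b, c, d). {a, b}) ` four_cycles E T"
  have "finite T" using assms(2) G finite_subset by (auto simp: graph_def)
  then have "finite (four_cycles E T)" by (rule finite_four_cycles)
  then have "card ((\<lambda>(a, b, c, d). {a, b}) ` four_cycles E T) \<le> card (four_cycles E T)"
    by (rule card_image_le)
  moreover have "card (induced_edges E T) - card ((\<lambda>(a, b, c, d). {a, b}) ` four_cycles E T) \<le> card E'"
    unfolding E'_def using \<open>finite (four_cycles E T)\<close> by (intro diff_card_le_card_Diff) simp
  ultimately have "card (induced_edges E T) \<le> card E' + card (four_cycles E T)"
    by linarith
  then have "real (card (induced_edges E T)) \<le> real (card E') + real (card (four_cycles E T))"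
    by (simp flip: of_nat_add)
  with many_edges have E'_big: "c * real (card T) < real (card E')" by linarith
  have "E' \<noteq> {}"
    using E'_big \<open>0 \<le> c\<close> by (auto simp: mult_less_0_iff)
  then obtain e where "e \<in> E'" by blast
  then have "e \<subseteq> T" "e \<noteq> {}"
    using G by (auto simp: E'_def induced_edges_def graph_def)
  then have "0 < real (card T)"
    using \<open>finite T\<close> by (auto simp: card_gt_0_iff)
  with E'_big have "2 * c \<le> avg_degree T E'"
    by (simp add: avg_degree_def field_simps)
  moreover have "subgraph T E' V E"
    using assms(2) by (auto simp: subgraph_def E'_def induced_edges_def)
  ultimately show ?thesis
    using C4_free_without_first_edges unfolding E'_def by blast
qed

section \<open>Counting edges and 4-cycles in bipartite graphs\<close>

lemma sum_degree_eq_card_incident_edges: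
  assumes G: "graph V E" and bip: "bipartite_with V E A B" and "A' \<subseteq> A"
  shows "(\<Sum>a\<in>A'. degree E a) = card {e \<in> E. e \<inter> A' \<noteq> {}}"
proof -
  define P where "P = (SIGMA a:A'. neighbours E a)"
  have disj: "A \<inter> B = {}" using bip by (simp add: bipartite_with_def)
  have "finite A'"
    using G bip \<open>A' \<subseteq> A\<close> unfolding graph_def bipartite_with_def by (meson finite_Un finite_subset)
  then have card_P: "card P = (\<Sum>a\<in>A'. degree E a)"
    using finite_neighbours[OF G] by (simp add: P_def degree_eq_card_neighbours)
  have "bij_betw (\<lambda>(a, b). {a, b}) P {e \<in> E. e \<inter> A' \<noteq> {}}"
  proof (rule bij_betw_imageI)
    show "inj_on (\<lambda>(a, b). {a, b}) P"
    proof (rule inj_onI, clarify)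
      fix a b a' b' assume "(a, b) \<in> P" "(a', b') \<in> P" "{a, b} = {a', b'}"
      moreover have "a \<in> A" "a' \<in> A" "b \<in> B" "b' \<in> B"
        using calculation bipartite_neighbours_subset[OF bip] \<open>A' \<subseteq> A\<close> by (auto simp: P_def)
      ultimately show "a = a' \<and> b = b'" using disj by (auto simp: doubleton_eq_iff)
    qed
    show "(\<lambda>(a, b). {a, b}) ` P = {e \<in> E. e \<inter> A' \<noteq> {}}"
    proof
      show "(\<lambda>(a, b). {a, b}) ` P \<subseteq> {e \<in> E. e \<inter> A' \<noteq> {}}"
        by (auto simp: P_def neighbours_def)
      show "{e \<in> E. e \<inter> A' \<noteq> {}} \<subseteq> (\<lambda>(a, b). {a, b}) ` P"
      proof clarify
        fix e assume "e \<in> E" "e \<inter> A' \<noteq> {}"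
        then obtain a b where "a \<in> A" "b \<in> B" "e = {a, b}"
          using bip \<open>e \<in> E\<close> unfolding bipartite_with_def by blast
        with \<open>e \<in> E\<close> \<open>e \<inter> A' \<noteq> {}\<close> \<open>A' \<subseteq> A\<close> disj have "(a, b) \<in> P" "e = {a, b}"
          by (auto simp: P_def neighbours_def)
        then show "e \<in> (\<lambda>(a, b). {a, b}) ` P" by (auto intro!: image_eqI[of _ _ "(a, b)"])
      qed
    qed
  qed
  then show ?thesis unfolding card_P[symmetric] by (rule bij_betw_same_card)
qed

lemma sum_degree_le_card_induced_edges:
  assumes G: "graph V E" and bip: "bipartite_with V E A B" and "A' \<subseteq> A"
  shows "(\<Sum>a\<in>A'. real (degree E a)) \<le> real (card (induced_edges E (A' \<union> B)))"
proof -
  have "{e \<in> E. e \<inter> A' \<noteq> {}} \<subseteq> induced_edges E (A' \<union> B)"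
  proof clarify
    fix e assume "e \<in> E" "e \<inter> A' \<noteq> {}"
    then obtain a b where "a \<in> A" "b \<in> B" "e = {a, b}"
      using bip unfolding bipartite_with_def by blast
    with \<open>e \<inter> A' \<noteq> {}\<close> \<open>A' \<subseteq> A\<close> bip have "e \<subseteq> A' \<union> B"
      by (auto simp: bipartite_with_def)
    with \<open>e \<in> E\<close> show "e \<in> induced_edges E (A' \<union> B)" by (simp add: induced_edges_def)
  qed
  then have "card {e \<in> E. e \<inter> A' \<noteq> {}} \<le> card (induced_edges E (A' \<union> B))"
    using graph_finite_edges[OF G] by (intro card_mono) (auto simp: induced_edges_def)
  then show ?thesis
    unfolding sum_degree_eq_card_incident_edges[OF G bip \<open>A' \<subseteq> A\<close>, symmetric]
    by (simp flip: of_nat_sum)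
qed

lemma card_four_cycles_le_twice_from:
  assumes bip: "bipartite_with V E A B" and "finite T"
  shows "card (four_cycles E T) \<le> 2 * card {y \<in> four_cycles E T. fst y \<in> A}"
proof -
  define from_A where "from_A = {y \<in> four_cycles E T. fst y \<in> A}"
  define from_B where "from_B = {y \<in> four_cycles E T. fst y \<notin> A}"
  define rotate where "rotate y = (case y of (a, b, c, d) \<Rightarrow> (b, c, d, a))"
    for y :: "'a \<times> 'a \<times> 'a \<times> 'a"
  have fin: "finite from_A" "finite from_B"
    using finite_four_cycles[OF \<open>finite T\<close>] by (auto simp: from_A_def from_B_def)
  have "card from_B \<le> card from_A"
  proof (rule card_inj_on_le[of rotate])
    show "inj_on rotate from_B" unfolding rotate_def by (rule inj_onI) auto
    show "rotate ` from_B \<subseteq> from_A"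
    proof (rule image_subsetI)
      fix y assume "y \<in> from_B"
      moreover obtain a b c d where y: "y = (a, b, c, d)" by (cases y) auto
      ultimately have "(a, b, c, d) \<in> four_cycles E T" "a \<notin> A" "{a, b} \<in> E"
        by (auto simp: from_B_def four_cycles_def)
      moreover have "b \<in> A" using bipartite_edgeD[OF bip \<open>{a, b} \<in> E\<close>] \<open>a \<notin> A\<close> by blast
      ultimately show "rotate y \<in> from_A"
        by (auto simp: y rotate_def from_A_def four_cycles_def insert_commute)
    qed
  qed (use fin in simp)
  moreover have "card (four_cycles E T) = card from_A + card from_B"
  proof -
    have "four_cycles E T = from_A \<union> from_B" "from_A \<inter> from_B = {}"
      by (auto simp: from_A_def from_B_def)
    then show ?thesis using fin by (simp add: card_Un_disjoint)
  qed
  ultimately show ?thesis unfolding from_A_def by linarith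
qed

lemma card_four_cycles_at_le:
  assumes G: "graph V E" and bip: "bipartite_with V E A B" and "a \<in> A" and "0 \<le> lam"
    and cod: "\<forall>x\<in>B. \<forall>y\<in>B. x \<noteq> y \<longrightarrow> real (codegree E x y) \<le> lam"
  shows "real (card {z. (a, z) \<in> four_cycles E T}) \<le> lam * real (degree E a) ^ 2"
proof -
  define N where "N = neighbours E"
  define pairs where "pairs = {(b, d) \<in> N a \<times> N a. b \<noteq> d}"
  define W where "W = (SIGMA bd:pairs. N (fst bd) \<inter> N (snd bd))"
  define unfold where "unfold x = (case x of ((b, d), c) \<Rightarrow> (b, c, d))"
    for x :: "('a \<times> 'a) \<times> 'a"
  have fin_N: "finite (N x)" for x
    using finite_neighbours[OF G] by (simp add: N_def)
  have "finite pairs"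
    using fin_N by (auto simp: pairs_def intro: finite_subset[of _ "N a \<times> N a"])
  then have "finite W"
    using fin_N by (simp add: W_def)
  have "{z. (a, z) \<in> four_cycles E T} \<subseteq> unfold ` W"
  proof
    fix z assume "z \<in> {z. (a, z) \<in> four_cycles E T}"
    moreover obtain b c d where z: "z = (b, c, d)" by (cases z) auto
    ultimately have "distinct [a, b, c, d]" "{a, b} \<in> E" "{b, c} \<in> E" "{c, d} \<in> E" "{d, a} \<in> E"
      by (auto simp: four_cycles_def)
    then have "((b, d), c) \<in> W"
      by (simp add: W_def pairs_def N_def neighbours_def insert_commute)
    moreover have "z = unfold ((b, d), c)" by (simp add: z unfold_def)
    ultimately show "z \<in> unfold ` W" by blast
  qed
  then have "card {z. (a, z) \<in> four_cycles E T} \<le> card (unfold ` W)"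
    using \<open>finite W\<close> by (intro card_mono) auto
  also have "\<dots> \<le> card W"
    using \<open>finite W\<close> by (rule card_image_le)
  also have "card W = (\<Sum>bd\<in>pairs. codegree E (fst bd) (snd bd))"
    using \<open>finite pairs\<close> fin_N by (simp add: W_def codegree_eq_card_common_neighbours N_def)
  finally have "real (card {z. (a, z) \<in> four_cycles E T})
      \<le> (\<Sum>bd\<in>pairs. real (codegree E (fst bd) (snd bd)))"
    by (simp flip: of_nat_sum)
  also have "\<dots> \<le> (\<Sum>bd\<in>pairs. lam)"
  proof (intro sum_mono)
    fix bd assume "bd \<in> pairs"
    then have "fst bd \<in> B" "snd bd \<in> B" "fst bd \<noteq> snd bd"
      using bipartite_neighbours_subset[OF bip \<open>a \<in> A\<close>] by (auto simp: pairs_def N_def)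
    then show "real (codegree E (fst bd) (snd bd)) \<le> lam" using cod by blast
  qed
  also have "\<dots> \<le> lam * real (degree E a) ^ 2"
  proof -
    have "card pairs \<le> card (N a \<times> N a)"
      using fin_N by (intro card_mono) (auto simp: pairs_def)
    then have "real (card pairs) \<le> real (degree E a) ^ 2"
      by (simp add: N_def degree_eq_card_neighbours card_cartesian_product power2_eq_square
          flip: of_nat_mult)
    then show ?thesis
      using \<open>0 \<le> lam\<close> by (simp add: mult.commute mult_left_mono)
  qed
  finally show ?thesis .
qed

lemma card_four_cycles_from_le:
  assumes G: "graph V E" and bip: "bipartite_with V E A B" and "finite T" and "0 \<le> lam"
    and cod: "\<forall>x\<in>B. \<forall>y\<in>B. x \<noteq> y \<longrightarrow> real (codegree E x y) \<le> lam"
  shows "real (card {y \<in> four_cycles E T. fst y \<in> A}) \<le> lam * (\<Sum>a\<in>A \<inter> T. real (degree E a) ^ 2)"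
proof -
  have "{y \<in> four_cycles E T. fst y \<in> A} = (SIGMA a:A \<inter> T. {z. (a, z) \<in> four_cycles E T})"
    by (auto simp: four_cycles_def)
  moreover have "finite {z. (a, z) \<in> four_cycles E T}" for a
    using \<open>finite T\<close> by (auto simp: four_cycles_def intro: finite_subset[of _ "T \<times> T \<times> T"])
  ultimately have "real (card {y \<in> four_cycles E T. fst y \<in> A})
      = (\<Sum>a\<in>A \<inter> T. real (card {z. (a, z) \<in> four_cycles E T}))"
    using \<open>finite T\<close> by (simp add: card_SigmaI flip: of_nat_sum)
  also have "\<dots> \<le> (\<Sum>a\<in>A \<inter> T. lam * real (degree E a) ^ 2)"
    using card_four_cycles_at_le[OF G bip _ \<open>0 \<le> lam\<close> cod] by (intro sum_mono) auto
  finally show ?thesis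
    by (simp add: sum_distrib_left)
qed

lemma card_four_cycles_le_degree_class:
  assumes G: "graph V E" and bip: "bipartite_with V E A B" and "A' \<subseteq> A" and "0 \<le> lam"
    and cod: "\<forall>x\<in>B. \<forall>y\<in>B. x \<noteq> y \<longrightarrow> real (codegree E x y) \<le> lam"
    and degs: "\<forall>a\<in>A'. real (degree E a) \<le> 2 * K"
  shows "real (card (four_cycles E (A' \<union> B))) \<le> 4 * K * lam * (\<Sum>a\<in>A'. real (degree E a))"
proof -
  have "finite (A' \<union> B)" "A \<inter> (A' \<union> B) = A'"
    using G bip \<open>A' \<subseteq> A\<close> finite_subset by (auto simp: graph_def bipartite_with_def)
  have "real (card (four_cycles E (A' \<union> B)))
      \<le> 2 * real (card {y \<in> four_cycles E (A' \<union> B). fst y \<in> A})"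
    using card_four_cycles_le_twice_from[OF bip \<open>finite (A' \<union> B)\<close>] by linarith
  also have "\<dots> \<le> 2 * (lam * (\<Sum>a\<in>A'. real (degree E a) ^ 2))"
    using card_four_cycles_from_le[OF G bip \<open>finite (A' \<union> B)\<close> \<open>0 \<le> lam\<close> cod]
      \<open>A \<inter> (A' \<union> B) = A'\<close> by simp
  also have "\<dots> \<le> 2 * (lam * (\<Sum>a\<in>A'. 2 * K * real (degree E a)))"
    using degs \<open>0 \<le> lam\<close>
    by (intro mult_left_mono sum_mono) (auto simp: power2_eq_square intro!: mult_right_mono)
  also have "\<dots> = 4 * K * lam * (\<Sum>a\<in>A'. real (degree E a))"
    by (simp add: sum_distrib_left mult_ac)
  finally show ?thesis .
qed

section \<open>Random sparsification\<close>

lemma expected_card_induced_edges: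
  assumes G: "graph V E" and bip: "bipartite_with V E A B" and "S \<subseteq> V"
  shows "(\<Sum>T\<in>Pow S. subset_prob S (\<lambda>x. if x \<in> A then p else q) T * real (card (induced_edges E T)))
    = p * q * real (card (induced_edges E S))"
    (is "(\<Sum>T\<in>Pow S. subset_prob S ?w T * _) = _")
proof -
  have "finite S"
    using G \<open>S \<subseteq> V\<close> finite_subset by (auto simp: graph_def)
  have "finite (induced_edges E S)"
    using graph_finite_edges[OF G] by (simp add: induced_edges_def)
  have "(\<Sum>T\<in>Pow S. subset_prob S ?w T * real (card (induced_edges E T)))
      = (\<Sum>T\<in>Pow S. subset_prob S ?w T * real (card {e \<in> induced_edges E S. e \<subseteq> T}))"
    by (intro sum.cong refl arg_cong[where f = "\<lambda>E. _ * real (card E)"]) (auto simp: induced_edges_def)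
  also have "\<dots> = (\<Sum>e\<in>induced_edges E S. \<Prod>x\<in>e. ?w x)"
    using \<open>finite S\<close> \<open>finite (induced_edges E S)\<close>
    by (rule sum_subset_prob_count) (simp add: induced_edges_def)
  also have "\<dots> = (\<Sum>e\<in>induced_edges E S. p * q)"
  proof (rule sum.cong [OF refl])
    fix e assume "e \<in> induced_edges E S"
    then obtain a b where ab: "a \<in> A" "b \<in> B" "e = {a, b}"
      using bip by (auto simp: induced_edges_def bipartite_with_def)
    moreover have "a \<noteq> b" "b \<notin> A"
      using ab bip by (auto simp: bipartite_with_def)
    ultimately show "(\<Prod>x\<in>e. ?w x) = p * q"
      by simp
  qed
  finally show ?thesis by simp
qed

lemma expected_card_four_cycles:
  assumes G: "graph V E" and bip: "bipartite_with V E A B" and "S \<subseteq> V"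
  shows "(\<Sum>T\<in>Pow S. subset_prob S (\<lambda>x. if x \<in> A then p else q) T * real (card (four_cycles E T)))
    = p^2 * q^2 * real (card (four_cycles E S))"
    (is "(\<Sum>T\<in>Pow S. subset_prob S ?w T * _) = _")
proof -
  define vertices where "vertices y = (case y of (a, b, c, d) \<Rightarrow> {a, b, c, d})"
    for y :: "'a \<times> 'a \<times> 'a \<times> 'a"
  have "finite S"
    using G \<open>S \<subseteq> V\<close> finite_subset by (auto simp: graph_def)
  have "(\<Sum>T\<in>Pow S. subset_prob S ?w T * real (card (four_cycles E T)))
      = (\<Sum>T\<in>Pow S. subset_prob S ?w T * real (card {y \<in> four_cycles E S. vertices y \<subseteq> T}))"
    by (intro sum.cong refl arg_cong[where f = "\<lambda>Q. _ * real (card Q)"])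
      (auto simp: four_cycles_def vertices_def)
  also have "\<dots> = (\<Sum>y\<in>four_cycles E S. \<Prod>x\<in>vertices y. ?w x)"
    using \<open>finite S\<close> finite_four_cycles[OF \<open>finite S\<close>]
    by (rule sum_subset_prob_count) (auto simp: four_cycles_def vertices_def)
  also have "\<dots> = (\<Sum>y\<in>four_cycles E S. p^2 * q^2)"
  proof (rule sum.cong [OF refl])
    fix y assume "y \<in> four_cycles E S"
    moreover obtain a b c d where y: "y = (a, b, c, d)" by (cases y) auto
    ultimately have cyc: "distinct [a, b, c, d]" "{a, b} \<in> E" "{b, c} \<in> E" "{c, d} \<in> E"
      by (auto simp: four_cycles_def)
    have "A \<inter> B = {}" using bip by (simp add: bipartite_with_def)
    with cyc have "a \<in> A \<and> b \<notin> A \<and> c \<in> A \<and> d \<notin> A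
        \<or> a \<notin> A \<and> b \<in> A \<and> c \<notin> A \<and> d \<in> A"
      using bipartite_edgeD[OF bip] by blast
    then show "(\<Prod>x\<in>vertices y. ?w x) = p^2 * q^2"
      using cyc(1) by (auto simp: y vertices_def power2_eq_square)
  qed
  finally show ?thesis by simp
qed

lemma C4_free_subgraph_of_random_subset:
  fixes p q c :: real
  assumes G: "graph V E" and bip: "bipartite_with V E A B" and "S \<subseteq> V"
    and p: "0 \<le> p" "p \<le> 1" and q: "0 \<le> q" "q \<le> 1" and "0 \<le> c"
    and gain: "c * (p * real (card (A \<inter> S)) + q * real (card (B \<inter> S)))
      < p * q * real (card (induced_edges E S)) - p^2 * q^2 * real (card (four_cycles E S))"
  shows "\<exists>V' E'. subgraph V' E' V E \<and> C4_free E' \<and> 2 * c \<le> avg_degree V' E'"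
proof -
  define w where "w x = (if x \<in> A then p else q)" for x
  define \<Phi> where "\<Phi> T = real (card (induced_edges E T)) - real (card (four_cycles E T))
    - c * real (card T)" for T
  have "finite S"
    using G \<open>S \<subseteq> V\<close> finite_subset by (auto simp: graph_def)
  have "A \<inter> B = {}" "S = (A \<inter> S) \<union> (B \<inter> S)"
    using bip \<open>S \<subseteq> V\<close> by (auto simp: bipartite_with_def)
  then have "(\<Sum>x\<in>S. w x) = (\<Sum>x\<in>A \<inter> S. w x) + (\<Sum>x\<in>B \<inter> S. w x)"
    using \<open>finite S\<close> sum.union_disjoint[of "A \<inter> S" "B \<inter> S" w] by auto
  also have "\<dots> = (\<Sum>x\<in>A \<inter> S. p) + (\<Sum>x\<in>B \<inter> S. q)"
    using \<open>A \<inter> B = {}\<close> by (intro arg_cong2[where f = "(+)"] sum.cong) (auto simp: w_def)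
  finally have size: "(\<Sum>T\<in>Pow S. subset_prob S w T * real (card T))
      = p * real (card (A \<inter> S)) + q * real (card (B \<inter> S))"
    using \<open>finite S\<close> by (simp add: sum_subset_prob_card)
  have "(\<Sum>T\<in>Pow S. subset_prob S w T * \<Phi> T)
      = p * q * real (card (induced_edges E S)) - p^2 * q^2 * real (card (four_cycles E S))
        - c * (p * real (card (A \<inter> S)) + q * real (card (B \<inter> S)))"
    unfolding \<Phi>_def size[symmetric] w_def
      expected_card_induced_edges[OF G bip \<open>S \<subseteq> V\<close>, symmetric]
      expected_card_four_cycles[OF G bip \<open>S \<subseteq> V\<close>, symmetric]
    by (simp add: right_diff_distrib sum_subtractf sum_distrib_left mult.left_commute)
  with gain have "0 < (\<Sum>T\<in>Pow S. subset_prob S w T * \<Phi> T)" by linarith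
  moreover have "0 \<le> w x \<and> w x \<le> 1" for x
    using p q by (simp add: w_def)
  ultimately obtain T where "T \<subseteq> S" "0 < \<Phi> T"
    using ex_subset_pos_if_expectation_pos[of S w \<Phi>] by blast
  then have "c * real (card T) < real (card (induced_edges E T)) - real (card (four_cycles E T))"
    by (simp add: \<Phi>_def)
  moreover have "T \<subseteq> V" using \<open>T \<subseteq> S\<close> \<open>S \<subseteq> V\<close> by blast
  ultimately show ?thesis
    using C4_free_subgraph_by_deletion[OF G _ \<open>0 \<le> c\<close>] by blast
qed

lemma C4_free_subgraph_of_degree_class:
  fixes K lam c :: real
  assumes G: "graph V E" and bip: "bipartite_with V E A B"
    and cod: "\<forall>x\<in>B. \<forall>y\<in>B. x \<noteq> y \<longrightarrow> real (codegree E x y) \<le> lam"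
    and "A' \<subseteq> A" and degs: "\<forall>a\<in>A'. K \<le> real (degree E a) \<and> real (degree E a) \<le> 2 * K"
    and "0 < c" "0 < lam" "1 \<le> 64 * c * lam" "8 * c \<le> K"
    and many_edges: "512 * c^2 * lam * real (card B) < 3 * (\<Sum>a\<in>A'. real (degree E a))"
  shows "\<exists>V' E'. subgraph V' E' V E \<and> C4_free E' \<and> 2 * c \<le> avg_degree V' E'"
proof -
  define S where "S = A' \<union> B"
  define X where "X = (\<Sum>a\<in>A'. real (degree E a))"
  \<comment> \<open>Then \<open>4 p q K lam = 1/2\<close>: the expected number of 4-cycles is at most half the
    expected number of edges.\<close>
  define p where "p = 1 / (64 * c * lam)"
  define q where "q = 8 * c / K"
  have "S \<subseteq> V" "A \<inter> S = A'" "B \<inter> S = B"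
    using \<open>A' \<subseteq> A\<close> bip by (auto simp: S_def bipartite_with_def)
  have "0 < K" using \<open>0 < c\<close> \<open>8 * c \<le> K\<close> by linarith
  have size: "real (card A') \<le> X / K"
  proof -
    have "K * real (card A') = (\<Sum>a\<in>A'. K)" by simp
    also have "\<dots> \<le> X" unfolding X_def using degs by (intro sum_mono) auto
    finally show ?thesis using \<open>0 < K\<close> by (simp add: field_simps)
  qed
  have "0 \<le> p" "p \<le> 1" "0 \<le> q" "q \<le> 1"
    using \<open>0 < c\<close> \<open>0 < lam\<close> \<open>1 \<le> 64 * c * lam\<close> \<open>8 * c \<le> K\<close> \<open>0 < K\<close>
    by (auto simp: p_def q_def field_simps)
  have pq: "p * q = 1 / (8 * lam * K)"
    using \<open>0 < c\<close> \<open>0 < lam\<close> \<open>0 < K\<close> by (simp add: p_def q_def field_simps)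
  have edges: "X \<le> real (card (induced_edges E S))"
    using sum_degree_le_card_induced_edges[OF G bip \<open>A' \<subseteq> A\<close>] unfolding S_def X_def .
  have "\<forall>a\<in>A'. real (degree E a) \<le> 2 * K" using degs by blast
  then have cycles: "real (card (four_cycles E S)) \<le> 4 * K * lam * X"
    using card_four_cycles_le_degree_class[OF G bip \<open>A' \<subseteq> A\<close> _ cod] \<open>0 < lam\<close>
    unfolding S_def X_def by simp
  have "X / (16 * lam * K) = p * q * X - p^2 * q^2 * (4 * K * lam * X)"
    using \<open>0 < lam\<close> \<open>0 < K\<close> by (simp add: power_mult_distrib[symmetric] pq field_simps power2_eq_square)
  also have "\<dots> \<le> p * q * real (card (induced_edges E S)) - p^2 * q^2 * real (card (four_cycles E S))"
    using edges cycles \<open>0 \<le> p\<close> \<open>0 \<le> q\<close> by (intro diff_mono mult_left_mono) auto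
  finally have gain: "X / (16 * lam * K)
      \<le> p * q * real (card (induced_edges E S)) - p^2 * q^2 * real (card (four_cycles E S))" .
  have "c * (p * real (card A') + q * real (card B)) \<le> c * (p * (X / K) + q * real (card B))"
    using size \<open>0 < c\<close> \<open>0 \<le> p\<close> by (intro mult_left_mono add_right_mono) auto
  also have "\<dots> = X / (64 * lam * K) + 8 * c^2 * real (card B) / K"
    using \<open>0 < c\<close> \<open>0 < lam\<close> \<open>0 < K\<close> by (simp add: p_def q_def field_simps power2_eq_square)
  also have "\<dots> < X / (16 * lam * K)"
    using many_edges \<open>0 < lam\<close> \<open>0 < K\<close> by (simp add: X_def field_simps)
  finally show ?thesis
    using C4_free_subgraph_of_random_subset[OF G bip \<open>S \<subseteq> V\<close>
        \<open>0 \<le> p\<close> \<open>p \<le> 1\<close> \<open>0 \<le> q\<close> \<open>q \<le> 1\<close>]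
      gain \<open>0 < c\<close> \<open>A \<inter> S = A'\<close> \<open>B \<inter> S = B\<close> by simp
qed

section \<open>A heavy dyadic degree class\<close>

lemma high_degree_mass:
  fixes D :: real
  assumes G: "graph V E" and bip: "bipartite_with V E A B" and "0 \<le> D" "D \<le> avg_degree V E"
  shows "D * real (card B) \<le> 2 * (\<Sum>a\<in>{a \<in> A. D / 4 \<le> real (degree E a)}. real (degree E a))"
proof -
  define H where "H = {a \<in> A. D / 4 \<le> real (degree E a)}"
  have VAB: "V = A \<union> B" "A \<inter> B = {}"
    using bip by (auto simp: bipartite_with_def)
  have "finite A" "finite B"
    using G VAB by (auto simp: graph_def)
  have "{e \<in> E. e \<inter> A \<noteq> {}} = E"
    using bip by (fastforce simp: bipartite_with_def)
  then have "real (card E) = (\<Sum>a\<in>A. real (degree E a))"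
    using sum_degree_eq_card_incident_edges[OF G bip subset_refl] by (simp flip: of_nat_sum)
  also have "\<dots> = (\<Sum>a\<in>H. real (degree E a)) + (\<Sum>a\<in>A - H. real (degree E a))"
    using sum.subset_diff[of H A "\<lambda>a. real (degree E a)"] \<open>finite A\<close> by (auto simp: H_def)
  also have "(\<Sum>a\<in>A - H. real (degree E a)) \<le> (\<Sum>a\<in>A. D / 4)"
    using \<open>finite A\<close> \<open>0 \<le> D\<close>
    by (intro order_trans[OF sum_mono sum_mono2]) (auto simp: H_def)
  finally have edges: "real (card E) \<le> (\<Sum>a\<in>H. real (degree E a)) + D / 4 * real (card A)"
    by (simp add: mult.commute)
  have "card V = card A + card B"
    using VAB \<open>finite A\<close> \<open>finite B\<close> by (simp add: card_Un_disjoint)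
  show ?thesis
  proof (cases "card V = 0")
    case True
    then have "D = 0" using \<open>0 \<le> D\<close> \<open>D \<le> avg_degree V E\<close> by (simp add: avg_degree_def)
    then show ?thesis by (simp add: sum_nonneg)
  next
    case False
    then have "0 < real (card A) + real (card B)"
      using \<open>card V = card A + card B\<close> by linarith
    moreover have "D \<le> 2 * real (card E) / (real (card A) + real (card B))"
      using \<open>D \<le> avg_degree V E\<close> \<open>card V = card A + card B\<close> by (simp add: avg_degree_def)
    ultimately have "D * (real (card A) + real (card B)) \<le> 2 * real (card E)"
      by (simp add: pos_le_divide_eq)
    moreover have "0 \<le> D * real (card A)"
      using \<open>0 \<le> D\<close> by simp
    ultimately show ?thesis
      using edges unfolding H_def by (simp add: distrib_left)
  qed
qed

lemma dyadic_class_pigeonhole: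
  fixes f :: "'a \<Rightarrow> nat"
  assumes "finite H" and "\<forall>a\<in>H. f a \<le> n"
  obtains i where "(\<Sum>a\<in>H. real (f a))
    \<le> (real (floor_log n) + 1) * (\<Sum>a\<in>{a \<in> H. floor_log (f a) = i}. real (f a))"
proof -
  define s where "s i = (\<Sum>a\<in>{a \<in> H. floor_log (f a) = i}. real (f a))" for i
  have "(\<Sum>a\<in>H. real (f a)) = (\<Sum>i\<le>floor_log n. s i)"
    unfolding s_def using assms floor_log_le_iff by (intro sum.group[symmetric]) auto
  also have "\<dots> \<le> (\<Sum>i\<le>floor_log n. Max (s ` {..floor_log n}))"
    by (intro sum_mono Max_ge) auto
  also have "\<dots> = (real (floor_log n) + 1) * Max (s ` {..floor_log n})"
    by simp
  finally have bound: "(\<Sum>a\<in>H. real (f a)) \<le> (real (floor_log n) + 1) * Max (s ` {..floor_log n})" .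
  have "Max (s ` {..floor_log n}) \<in> s ` {..floor_log n}"
    by (rule Max_in) auto
  then obtain i where "Max (s ` {..floor_log n}) = s i"
    by blast
  with bound show ?thesis
    using that unfolding s_def by (simp add: add.commute)
qed

lemma floor_log_bounds:
  assumes "0 < n"
  shows "2 ^ floor_log n \<le> real n \<and> real n < 2 * 2 ^ floor_log n"
proof -
  have "2 ^ floor_log n \<le> n" "n < 2 * 2 ^ floor_log n"
    using floor_log_exp2_le[OF assms] floor_log_exp2_gt by auto
  then have "real (2 ^ floor_log n) \<le> real n" "real n < real (2 * 2 ^ floor_log n)"
    by (simp only: of_nat_le_iff of_nat_less_iff)+
  then show ?thesis by simp
qed

lemma floor_log_nat_floor_le_log:
  fixes d :: real
  assumes "1 \<le> d"
  shows "real (floor_log (nat \<lfloor>d\<rfloor>)) \<le> log 2 d"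
proof -
  have "0 < nat \<lfloor>d\<rfloor>" using assms by linarith
  then have "real (floor_log (nat \<lfloor>d\<rfloor>)) \<le> log 2 (nat \<lfloor>d\<rfloor>)"
    by (intro le_log2_of_power floor_log_exp2_le)
  also have "\<dots> \<le> log 2 d"
    using assms \<open>0 < nat \<lfloor>d\<rfloor>\<close> by (simp add: of_nat_floor)
  finally show ?thesis .
qed

lemma card_part_pos_if_avg_degree_pos:
  assumes G: "graph V E" and bip: "bipartite_with V E A B" and "0 < avg_degree V E"
  shows "0 < card B"
proof -
  obtain e where "e \<in> E"
    using \<open>0 < avg_degree V E\<close> by (fastforce simp: avg_degree_def)
  then have "B \<noteq> {}" using bip by (auto simp: bipartite_with_def)
  then show ?thesis using G bip by (auto simp: graph_def bipartite_with_def card_gt_0_iff)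
qed

lemma exists_heavy_dyadic_class:
  fixes D d :: real
  assumes G: "graph V E" and bip: "bipartite_with V E A B" and "0 \<le> D" "D \<le> avg_degree V E"
    and degA: "\<forall>x\<in>A. real (degree E x) \<le> d"
  obtains i where "D * real (card B) \<le> 2 * (real (floor_log (nat \<lfloor>d\<rfloor>)) + 1)
    * (\<Sum>a\<in>{a \<in> A. D / 4 \<le> real (degree E a) \<and> floor_log (degree E a) = i}. real (degree E a))"
proof -
  define H where "H = {a \<in> A. D / 4 \<le> real (degree E a)}"
  have "finite H"
    using G bip by (auto simp: H_def graph_def bipartite_with_def)
  moreover have "\<forall>a\<in>H. degree E a \<le> nat \<lfloor>d\<rfloor>"
    using degA by (auto simp: H_def intro: le_nat_floor)
  ultimately obtain i where "(\<Sum>a\<in>H. real (degree E a)) \<le> (real (floor_log (nat \<lfloor>d\<rfloor>)) + 1)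
      * (\<Sum>a\<in>{a \<in> H. floor_log (degree E a) = i}. real (degree E a))"
    by (rule dyadic_class_pigeonhole)
  moreover have "D * real (card B) \<le> 2 * (\<Sum>a\<in>H. real (degree E a))"
    using high_degree_mass[OF G bip \<open>0 \<le> D\<close> \<open>D \<le> avg_degree V E\<close>] by (simp add: H_def)
  ultimately have "D * real (card B) \<le> 2 * (real (floor_log (nat \<lfloor>d\<rfloor>)) + 1)
      * (\<Sum>a\<in>{a \<in> H. floor_log (degree E a) = i}. real (degree E a))"
    by linarith
  moreover have "{a \<in> H. floor_log (degree E a) = i}
      = {a \<in> A. D / 4 \<le> real (degree E a) \<and> floor_log (degree E a) = i}"
    by (auto simp: H_def)
  ultimately show ?thesis
    using that by simp
qed

lemma exists_heavy_degree_class: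
  fixes d :: real
  assumes "1 \<le> d" and log_small: "128 * (log 2 d + 1) < d powr (1/20)"
    and G: "graph V E" and bip: "bipartite_with V E A B"
    and degA: "\<forall>x\<in>A. real (degree E x) \<le> d" and avg: "d powr (3/4) \<le> avg_degree V E"
  obtains A' K where "A' \<subseteq> A" "\<forall>a\<in>A'. K \<le> real (degree E a) \<and> real (degree E a) \<le> 2 * K"
    "d powr (3/4) \<le> 8 * K" "64 * d powr (7/10) * real (card B) < (\<Sum>a\<in>A'. real (degree E a))"
proof -
  define I where "I = floor_log (nat \<lfloor>d\<rfloor>)"
  have "0 < d powr (3/4)" using \<open>1 \<le> d\<close> by simp
  then obtain i where class_mass: "d powr (3/4) * real (card B) \<le> 2 * (real I + 1)
    * (\<Sum>a\<in>{a \<in> A. d powr (3/4) / 4 \<le> real (degree E a) \<and> floor_log (degree E a) = i}. real (degree E a))"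
    using exists_heavy_dyadic_class[OF G bip _ avg degA] unfolding I_def by (meson less_imp_le)
  define A' where "A' = {a \<in> A. d powr (3/4) / 4 \<le> real (degree E a) \<and> floor_log (degree E a) = i}"
  define X where "X = (\<Sum>a\<in>A'. real (degree E a))"
  have "0 < card B"
    using avg \<open>0 < d powr (3/4)\<close> by (intro card_part_pos_if_avg_degree_pos[OF G bip]) linarith
  have "128 * (real I + 1) < d powr (1/20)"
    using floor_log_nat_floor_le_log[OF \<open>1 \<le> d\<close>] log_small by (simp add: I_def)
  then have "128 * (real I + 1) * (d powr (7/10) * real (card B))
      < d powr (1/20) * (d powr (7/10) * real (card B))"
    using \<open>0 < card B\<close> \<open>1 \<le> d\<close> by (intro mult_strict_right_mono) auto
  also have "\<dots> = d powr (3/4) * real (card B)"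
    by (simp add: mult.assoc flip: powr_add)
  also have "\<dots> \<le> 2 * (real I + 1) * X"
    using class_mass by (simp add: A'_def X_def)
  finally have "(2 * (real I + 1)) * (64 * d powr (7/10) * real (card B)) < (2 * (real I + 1)) * X"
    by (simp add: algebra_simps)
  then have heavy: "64 * d powr (7/10) * real (card B) < X"
    by (rule mult_left_less_imp_less) simp
  have degs: "\<forall>a\<in>A'. 2 ^ i \<le> real (degree E a) \<and> real (degree E a) < 2 * 2 ^ i"
  proof
    fix a assume "a \<in> A'"
    then have "d powr (3/4) / 4 \<le> real (degree E a)" "floor_log (degree E a) = i"
      by (auto simp: A'_def)
    moreover from this(1) have "0 < real (degree E a)"
      using \<open>0 < d powr (3/4)\<close> by linarith
    ultimately show "2 ^ i \<le> real (degree E a) \<and> real (degree E a) < 2 * 2 ^ i"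
      using floor_log_bounds[of "degree E a"] by simp
  qed
  have "0 \<le> 64 * d powr (7/10) * real (card B)" by simp
  with heavy have "X \<noteq> 0" by linarith
  then have "A' \<noteq> {}" by (auto simp: X_def)
  then obtain a where "a \<in> A'" by blast
  then have "d powr (3/4) \<le> 8 * 2 ^ i"
    using degs by (force simp: A'_def)
  moreover have "A' \<subseteq> A" by (auto simp: A'_def)
  ultimately show ?thesis
    using that[of A' "2 ^ i"] degs heavy by (force simp: X_def)
qed

lemma C4_free_subgraph_for_fixed_d:
  fixes d :: real
  assumes "1024 \<le> d" and log_small: "128 * (log 2 d + 1) < d powr (1/20)"
    and G: "graph V E" and bip: "bipartite_with V E A B"
    and cod: "\<forall>x\<in>B. \<forall>y\<in>B. x \<noteq> y \<longrightarrow> real (codegree E x y) \<le> d powr (1/5)"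
    and degA: "\<forall>x\<in>A. real (degree E x) \<le> d" and avg: "d powr (3/4) \<le> avg_degree V E"
  shows "\<exists>V' E'. subgraph V' E' V E \<and> C4_free E' \<and> d powr (1/4) \<le> avg_degree V' E'"
proof -
  define c where "c = d powr (1/4) / 2"
  obtain A' K where "A' \<subseteq> A" and degs: "\<forall>a\<in>A'. K \<le> real (degree E a) \<and> real (degree E a) \<le> 2 * K"
    and "d powr (3/4) \<le> 8 * K"
    and heavy: "64 * d powr (7/10) * real (card B) < (\<Sum>a\<in>A'. real (degree E a))"
    using exists_heavy_degree_class[OF _ log_small G bip degA avg] \<open>1024 \<le> d\<close> by auto
  have "1 \<le> d powr (1/4)" "1 \<le> d powr (1/5)"
    using \<open>1024 \<le> d\<close> by (simp_all add: ge_one_powr_ge_zero)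
  have "32 \<le> d powr (1/2)"
  proof -
    have "(1024::real) powr (1/2) \<le> d powr (1/2)"
      using \<open>1024 \<le> d\<close> by (intro powr_mono2) auto
    then show ?thesis by (simp add: powr_half_sqrt)
  qed
  have "d powr (3/4) = d powr (1/2) * d powr (1/4)"
    by (simp flip: powr_add)
  then have "32 * d powr (1/4) \<le> d powr (3/4)"
    using \<open>32 \<le> d powr (1/2)\<close> by (simp add: mult_right_mono)
  with \<open>d powr (3/4) \<le> 8 * K\<close> have "8 * c \<le> K"
    by (simp add: c_def)
  have "512 * c^2 * d powr (1/5) * real (card B) = 128 * d powr (7/10) * real (card B)"
    by (simp add: c_def power2_eq_square flip: powr_add)
  moreover have "0 \<le> 64 * d powr (7/10) * real (card B)" by simp
  ultimately have "512 * c^2 * d powr (1/5) * real (card B) < 3 * (\<Sum>a\<in>A'. real (degree E a))"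
    using heavy by linarith
  moreover have "1 * 1 \<le> d powr (1/4) * d powr (1/5)"
    using \<open>1 \<le> d powr (1/4)\<close> \<open>1 \<le> d powr (1/5)\<close> by (intro mult_mono) auto
  then have "0 < c" "1 \<le> 64 * c * d powr (1/5)"
    using \<open>1024 \<le> d\<close> by (simp_all add: c_def)
  ultimately show ?thesis
    using C4_free_subgraph_of_degree_class[OF G bip cod \<open>A' \<subseteq> A\<close> degs _ _ _ \<open>8 * c \<le> K\<close>]
    by (simp add: c_def)
qed

lemma eventually_log_less_powr:
  "eventually (\<lambda>d::real. 128 * (log 2 d + 1) < d powr (1/20)) at_top"
  by real_asymp

theorem lemma6:
  shows "\<exists>d0::real. \<forall>d\<ge>d0. \<forall>(V::nat set) E A B.
     graph V E \<and> bipartite_with V E A B \<and> card A \<ge> card B \<and>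
     (\<forall>x\<in>B. \<forall>y\<in>B. x \<noteq> y \<longrightarrow> real (codegree E x y) \<le> d powr (1/5)) \<and>
     (\<forall>x\<in>A. real (degree E x) \<le> d) \<and>
     avg_degree V E \<ge> d powr (3/4)
     \<longrightarrow> (\<exists>V' E'. subgraph V' E' V E \<and> C4_free E' \<and> avg_degree V' E' \<ge> d powr (1/4))"
proof -
  obtain d1 where d1: "\<And>d. d1 \<le> d \<Longrightarrow> 128 * (log 2 d + 1) < d powr (1/20)"
    using eventually_log_less_powr unfolding eventually_at_top_linorder by blast
  show ?thesis
  proof (intro exI[of _ "max 1024 d1"] allI impI, elim conjE)
    fix d :: real and V :: "nat set" and E A B
    assume "max 1024 d1 \<le> d" and hyps: "graph V E" "bipartite_with V E A B"
      "\<forall>x\<in>B. \<forall>y\<in>B. x \<noteq> y \<longrightarrow> real (codegree E x y) \<le> d powr (1/5)"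
      "\<forall>x\<in>A. real (degree E x) \<le> d" "d powr (3/4) \<le> avg_degree V E"
    then have "1024 \<le> d" "d1 \<le> d" by auto
    then show "\<exists>V' E'. subgraph V' E' V E \<and> C4_free E' \<and> avg_degree V' E' \<ge> d powr (1/4)"
      using C4_free_subgraph_for_fixed_d[OF _ d1 hyps] by blast
  qed
qed

end
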